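(* Let $G$ be a tight graph with dense set $T$ and co-components $G_1,\dots,G_r$, let $T_i=T\cap V(G_i)$, $m_i=|T_i|$, and let $p_i$ be the common degree in $G_i$ of the vertices of $T_i$. Suppose $m_i=p_i+1$ for every $i$. Then each $G_i$ is a tight graph with $m(G_i)=m_i$ whose set of dense vertices is $T_i$, and $G$ has a b-colouring with exactly $m(G)$ colours if and only if every $G_i$ has a b-colouring with exactly $m(G_i)$ colours.
   Context: A co-component of $G$ is the subgraph of $G$ induced by the vertex set of a connected component of the complement $\overline{G}$; distinct co-components are completely joined in $G$. A colouring of $G$ is a map $c:V(G)\to\mathbb{Z}^+$ with adjacent vertices receiving distinct colours. A vertex is b-chromatic under $c$ if it is adjacent to a vertex of every colour used by $c$ other than its own; a b-colouring is a colouring in which every colour class has a b-chromatic vertex. $m(G)$ is the largest $k$ such that $G$ has at least $k$ vertices of degree at least $k-1$; a vertex of degree at least $m(G)-1$ is dense; $G$ is tight if it has exactly $m(G)$ dense vertices, each of degree exactly $m(G)-1$. (For a tight graph, all vertices of $T_i$ have the same degree in $G_i$.) *)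

theory Defs
  imports Main
begin

definition simple_graph :: "'a set \<Rightarrow> ('a \<Rightarrow> 'a \<Rightarrow> bool) \<Rightarrow> bool" where
  "simple_graph V E \<longleftrightarrow> finite V \<and> (\<forall>x y. E x y \<longrightarrow> x \<in> V \<and> y \<in> V)
     \<and> (\<forall>x y. E x y \<longrightarrow> E y x) \<and> (\<forall>x. \<not> E x x)"

definition induced :: "('a \<Rightarrow> 'a \<Rightarrow> bool) \<Rightarrow> 'a set \<Rightarrow> 'a \<Rightarrow> 'a \<Rightarrow> bool" where
  "induced E S = (\<lambda>x y. E x y \<and> x \<in> S \<and> y \<in> S)"

definition degree :: "'a set \<Rightarrow> ('a \<Rightarrow> 'a \<Rightarrow> bool) \<Rightarrow> 'a \<Rightarrow> nat" where
  "degree V E v = card {u \<in> V. E v u}"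

definition m_index :: "'a set \<Rightarrow> ('a \<Rightarrow> 'a \<Rightarrow> bool) \<Rightarrow> nat" where
  "m_index V E = Max {k. k \<le> card V \<and> k \<le> card {v \<in> V. k - 1 \<le> degree V E v}}"

definition dense_set :: "'a set \<Rightarrow> ('a \<Rightarrow> 'a \<Rightarrow> bool) \<Rightarrow> 'a set" where
  "dense_set V E = {v \<in> V. m_index V E - 1 \<le> degree V E v}"

definition tight :: "'a set \<Rightarrow> ('a \<Rightarrow> 'a \<Rightarrow> bool) \<Rightarrow> bool" where
  "tight V E \<longleftrightarrow> card (dense_set V E) = m_index V E
     \<and> (\<forall>v \<in> dense_set V E. degree V E v = m_index V E - 1)"

definition compl_edge :: "'a set \<Rightarrow> ('a \<Rightarrow> 'a \<Rightarrow> bool) \<Rightarrow> 'a \<Rightarrow> 'a \<Rightarrow> bool" where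
  "compl_edge V E = (\<lambda>x y. x \<in> V \<and> y \<in> V \<and> x \<noteq> y \<and> \<not> E x y)"

definition cocomponents :: "'a set \<Rightarrow> ('a \<Rightarrow> 'a \<Rightarrow> bool) \<Rightarrow> 'a set set" where
  "cocomponents V E = {C. \<exists>v \<in> V. C = {u \<in> V. (compl_edge V E)\<^sup>*\<^sup>* v u}}"

definition colouring :: "'a set \<Rightarrow> ('a \<Rightarrow> 'a \<Rightarrow> bool) \<Rightarrow> ('a \<Rightarrow> nat) \<Rightarrow> bool" where
  "colouring V E c \<longleftrightarrow> (\<forall>v \<in> V. c v > 0) \<and> (\<forall>u \<in> V. \<forall>v \<in> V. E u v \<longrightarrow> c u \<noteq> c v)"

definition b_chromatic :: "'a set \<Rightarrow> ('a \<Rightarrow> 'a \<Rightarrow> bool) \<Rightarrow> ('a \<Rightarrow> nat) \<Rightarrow> 'a \<Rightarrow> bool" where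
  "b_chromatic V E c v \<longleftrightarrow> (\<forall>k \<in> c ` V - {c v}. \<exists>u \<in> V. E v u \<and> c u = k)"

definition b_colouring :: "'a set \<Rightarrow> ('a \<Rightarrow> 'a \<Rightarrow> bool) \<Rightarrow> ('a \<Rightarrow> nat) \<Rightarrow> bool" where
  "b_colouring V E c \<longleftrightarrow> colouring V E c
     \<and> (\<forall>k \<in> c ` V. \<exists>v \<in> V. c v = k \<and> b_chromatic V E c v)"

definition has_b_colouring :: "'a set \<Rightarrow> ('a \<Rightarrow> 'a \<Rightarrow> bool) \<Rightarrow> nat \<Rightarrow> bool" where
  "has_b_colouring V E k \<longleftrightarrow> (\<exists>c. b_colouring V E c \<and> card (c ` V) = k)"

end

theory Submission
  imports Defs
begin

text \<open>A dense vertex of a co-component \<open>C\<close> is joined to all of \<open>V - C\<close>, so its degree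
  \<open>m(G) - 1\<close> equals \<open>p + |V - C|\<close>. Hence a vertex of \<open>C\<close> is dense in \<open>G\<close> iff its degree
  in \<open>G\<^sub>C\<close> is at least \<open>p\<close>, which makes \<open>G\<^sub>C\<close> tight with \<open>m(G\<^sub>C) = p + 1\<close> and dense set
  \<open>T \<inter> C\<close>. Counting then gives \<open>|T - C| = m(G) - (p + 1) = |V - C|\<close>: every vertex outside
  \<open>C\<close> is dense. So as soon as there are two co-components every vertex is dense, \<open>G\<close> is
  complete and both sides of the equivalence hold; with a single co-component \<open>G\<^sub>1 = G\<close>.\<close>

lemma m_index_eqI:
  assumes "finite V" "k \<le> card V" "k \<le> card {v \<in> V. k - 1 \<le> degree V E v}"
    and "\<And>j. j \<le> card V \<Longrightarrow> j \<le> card {v \<in> V. j - 1 \<le> degree V E v} \<Longrightarrow> j \<le> k"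
  shows "m_index V E = k"
  unfolding m_index_def
proof (rule Max_eqI)
  show "finite {j. j \<le> card V \<and> j \<le> card {v \<in> V. j - 1 \<le> degree V E v}}"
    by (rule finite_subset[of _ "{..card V}"]) auto
qed (use assms in auto)

lemma induced_self: "simple_graph V E \<Longrightarrow> induced E V = E"
  unfolding induced_def simple_graph_def by (intro ext) blast

lemma cocomponents_subset: "C \<in> cocomponents V E \<Longrightarrow> C \<subseteq> V"
  unfolding cocomponents_def by auto

lemma cocomponent_of_vertex:
  assumes "v \<in> V"
  shows "{u \<in> V. (compl_edge V E)\<^sup>*\<^sup>* v u} \<in> cocomponents V E"
    and "v \<in> {u \<in> V. (compl_edge V E)\<^sup>*\<^sup>* v u}"
  using assms unfolding cocomponents_def by auto

lemma cocomponent_joined: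
  assumes "C \<in> cocomponents V E" "x \<in> C" "y \<in> V - C"
  shows "E x y"
proof (rule ccontr)
  assume "\<not> E x y"
  from assms(1) obtain v where C: "C = {u \<in> V. (compl_edge V E)\<^sup>*\<^sup>* v u}"
    unfolding cocomponents_def by auto
  have "compl_edge V E x y"
    using \<open>\<not> E x y\<close> assms C unfolding compl_edge_def by auto
  with assms(2,3) C have "y \<in> C" by (auto intro: rtranclp.rtrancl_into_rtrancl)
  with assms(3) show False by simp
qed

lemma cocomponents_disjoint:
  assumes "simple_graph V E" "C \<in> cocomponents V E" "D \<in> cocomponents V E" "C \<noteq> D"
  shows "C \<inter> D = {}"
proof -
  have "symp (compl_edge V E)"
    using assms(1) unfolding simple_graph_def compl_edge_def by (auto intro: sympI)
  hence eqv: "equivp (compl_edge V E)\<^sup>*\<^sup>*" by (rule equivp_rtranclp)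
  from assms(2,3) obtain v w where
    C: "C = {u \<in> V. (compl_edge V E)\<^sup>*\<^sup>* v u}" and D: "D = {u \<in> V. (compl_edge V E)\<^sup>*\<^sup>* w u}"
    unfolding cocomponents_def by auto
  show ?thesis
  proof (rule ccontr)
    assume "C \<inter> D \<noteq> {}"
    then obtain u where "(compl_edge V E)\<^sup>*\<^sup>* v u" "(compl_edge V E)\<^sup>*\<^sup>* w u"
      using C D by auto
    hence "(compl_edge V E)\<^sup>*\<^sup>* v = (compl_edge V E)\<^sup>*\<^sup>* w"
      using eqv by (simp add: equivp_def)
    with C D assms(4) show False by simp
  qed
qed

lemma degree_cocomponent:
  assumes "simple_graph V E" "C \<in> cocomponents V E" "x \<in> C"
  shows "degree V E x = degree C (induced E C) x + (card V - card C)"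
proof -
  have C: "C \<subseteq> V" using assms(2) by (rule cocomponents_subset)
  have fin: "finite V" using assms(1) unfolding simple_graph_def by simp
  have "{u \<in> V. E x u} = {u \<in> C. induced E C x u} \<union> (V - C)"
    using C cocomponent_joined[OF assms(2,3)] assms(3) unfolding induced_def by auto
  moreover have "card ({u \<in> C. induced E C x u} \<union> (V - C))
      = card {u \<in> C. induced E C x u} + card (V - C)"
    using fin C by (intro card_Un_disjoint) (auto intro: finite_subset)
  moreover have "card (V - C) = card V - card C"
    using fin C by (simp add: card_Diff_subset finite_subset)
  ultimately show ?thesis unfolding degree_def by simp
qed

context
  fixes V :: "'a set" and E :: "'a \<Rightarrow> 'a \<Rightarrow> bool" and C :: "'a set" and p :: nat
  assumes graph: "simple_graph V E" and tight: "tight V E"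
    and C: "C \<in> cocomponents V E"
    and degree_dense: "\<forall>v \<in> dense_set V E \<inter> C. degree C (induced E C) v = p"
    and card_dense: "card (dense_set V E \<inter> C) = p + 1"
begin

lemma m_index_minus_one_eq:
  "m_index V E - 1 = p + (card V - card C)"
proof -
  have "dense_set V E \<inter> C \<noteq> {}" using card_dense by auto
  then obtain t where "t \<in> dense_set V E \<inter> C" by blast
  with tight degree_dense degree_cocomponent[OF graph C] show ?thesis
    unfolding tight_def by auto
qed

lemma dense_in_cocomponent_iff:
  "u \<in> C \<Longrightarrow> u \<in> dense_set V E \<longleftrightarrow> p \<le> degree C (induced E C) u"
  using degree_cocomponent[OF graph C] m_index_minus_one_eq cocomponents_subset[OF C]
  unfolding dense_set_def by auto

lemma cocomponent_m_index: "m_index C (induced E C) = p + 1"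
proof (rule m_index_eqI)
  have "finite V" using graph unfolding simple_graph_def by simp
  thus fin: "finite C" using cocomponents_subset[OF C] finite_subset by blast
  show "p + 1 \<le> card C" using card_dense card_mono[OF fin, of "dense_set V E \<inter> C"] by simp
  have dense: "{v \<in> C. p \<le> degree C (induced E C) v} = dense_set V E \<inter> C"
    using dense_in_cocomponent_iff by auto
  show "p + 1 \<le> card {v \<in> C. p + 1 - 1 \<le> degree C (induced E C) v}"
    using card_dense dense by simp
  fix j assume j: "j \<le> card {v \<in> C. j - 1 \<le> degree C (induced E C) v}"
  show "j \<le> p + 1"
  proof (rule ccontr)
    assume "\<not> j \<le> p + 1"
    hence "{v \<in> C. j - 1 \<le> degree C (induced E C) v} = {}"
      using dense_in_cocomponent_iff degree_dense by fastforce
    hence "card {v \<in> C. j - 1 \<le> degree C (induced E C) v} = 0" by (simp only: card.empty)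
    with j \<open>\<not> j \<le> p + 1\<close> show False by linarith
  qed
qed

lemma cocomponent_dense_set: "dense_set C (induced E C) = dense_set V E \<inter> C"
  using dense_in_cocomponent_iff unfolding dense_set_def cocomponent_m_index by auto

lemma cocomponent_tight: "tight C (induced E C)"
  unfolding tight_def cocomponent_dense_set cocomponent_m_index
  using card_dense degree_dense by simp

lemma outside_cocomponent_dense: "V - C \<subseteq> dense_set V E"
proof -
  let ?T = "dense_set V E"
  have fin: "finite V" using graph unfolding simple_graph_def by simp
  have TV: "?T \<subseteq> V" unfolding dense_set_def by auto
  have "card ?T = m_index V E" using tight unfolding tight_def by simp
  moreover have "card ?T = card (?T \<inter> C) + card (?T - C)"
    using fin TV by (metis card_Int_Diff finite_subset)
  ultimately have "card (?T - C) = card V - card C"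
    using m_index_minus_one_eq card_dense by linarith
  also have "\<dots> = card (V - C)"
    using fin cocomponents_subset[OF C] by (simp add: card_Diff_subset finite_subset)
  finally have "?T - C = V - C"
    using fin TV by (intro card_subset_eq) auto
  thus ?thesis by auto
qed

end

lemma complete_graph_has_b_colouring:
  assumes "finite V" "\<forall>x. \<not> E x x" "\<forall>u \<in> V. \<forall>v \<in> V. u \<noteq> v \<longrightarrow> E u v"
  shows "has_b_colouring V E (card V)"
proof -
  obtain h where "bij_betw h V {0..<card V}" using ex_bij_betw_finite_nat[OF assms(1)] by blast
  define c where "c = (\<lambda>x. Suc (h x))"
  have inj: "inj_on c V"
    using \<open>bij_betw h V _\<close> unfolding c_def bij_betw_def inj_on_def by auto
  have "colouring V E c"
    using inj assms(2) unfolding colouring_def c_def inj_on_def by auto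
  moreover have "b_chromatic V E c v" if "v \<in> V" for v
    using assms(3) that unfolding b_chromatic_def by fastforce
  ultimately have "b_colouring V E c" unfolding b_colouring_def by blast
  moreover have "card (c ` V) = card V" using inj by (rule card_image)
  ultimately show ?thesis unfolding has_b_colouring_def by blast
qed

lemma complete_graph_induced_has_b_colouring:
  assumes "simple_graph V E" "\<forall>u \<in> V. \<forall>v \<in> V. u \<noteq> v \<longrightarrow> E u v" "S \<subseteq> V"
  shows "has_b_colouring S (induced E S) (card S)"
proof (rule complete_graph_has_b_colouring)
  show "finite S" using assms(1,3) finite_subset unfolding simple_graph_def by blast
  show "\<forall>x. \<not> induced E S x x" using assms(1) unfolding simple_graph_def induced_def by simp
  show "\<forall>u \<in> S. \<forall>v \<in> S. u \<noteq> v \<longrightarrow> induced E S u v"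
    using assms(2,3) unfolding induced_def by blast
qed

lemma tight_all_dense_complete:
  assumes "simple_graph V E" "tight V E" "dense_set V E = V"
  shows "\<forall>u \<in> V. \<forall>v \<in> V. u \<noteq> v \<longrightarrow> E u v"
proof (intro ballI impI)
  fix u v assume uv: "u \<in> V" "v \<in> V" "u \<noteq> v"
  have fin: "finite V" using assms(1) unfolding simple_graph_def by simp
  have "{w \<in> V. E u w} \<subseteq> V - {u}" using assms(1) unfolding simple_graph_def by auto
  moreover have "card {w \<in> V. E u w} = card (V - {u})"
    using assms(2,3) uv(1) fin unfolding tight_def degree_def by simp
  ultimately have "{w \<in> V. E u w} = V - {u}" using fin by (intro card_subset_eq) auto
  thus "E u v" using uv by auto
qed

lemma has_b_colouring_single_cocomponent:
  assumes "simple_graph V E" "cocomponents V E \<subseteq> {V}"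
  shows "has_b_colouring V E (m_index V E) \<longleftrightarrow>
    (\<forall>C \<in> cocomponents V E. has_b_colouring C (induced E C) (m_index C (induced E C)))"
proof (cases "V = {}")
  case True
  have "m_index {} E = 0" using m_index_eqI[of "{}" 0 E] by simp
  moreover have "has_b_colouring {} E 0"
    unfolding has_b_colouring_def b_colouring_def colouring_def by simp
  moreover have "cocomponents {} E = {}" unfolding cocomponents_def by simp
  ultimately show ?thesis using True by simp
next
  case False
  then obtain v where "v \<in> V" by auto
  from cocomponent_of_vertex(1)[OF this] have "cocomponents V E \<noteq> {}" by blast
  with assms(2) have "cocomponents V E = {V}" by (simp add: subset_singleton_iff)
  thus ?thesis using induced_self[OF assms(1)] by simp
qed

lemma cocomponents_single_or_distinct:
  "cocomponents V E \<subseteq> {V} \<or> (\<exists>C \<in> cocomponents V E. \<exists>D \<in> cocomponents V E. C \<noteq> D)"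
proof (cases "cocomponents V E \<subseteq> {V}")
  case False
  then obtain C where C: "C \<in> cocomponents V E" "C \<noteq> V" by blast
  then obtain y where y: "y \<in> V" "y \<notin> C" using cocomponents_subset[OF C(1)] by blast
  obtain D where "D \<in> cocomponents V E" "y \<in> D" using cocomponent_of_vertex[OF y(1)] by blast
  with C(1) y(2) show ?thesis by blast
qed simp

theorem mainTheorem12:
  fixes V :: "'a set" and E :: "'a \<Rightarrow> 'a \<Rightarrow> bool"
  assumes "simple_graph V E"
    and "tight V E"
    and "\<forall>C \<in> cocomponents V E. \<exists>p::nat.
           (\<forall>v \<in> dense_set V E \<inter> C. degree C (induced E C) v = p)
           \<and> card (dense_set V E \<inter> C) = p + 1"
  shows "(\<forall>C \<in> cocomponents V E.
            tight C (induced E C)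
          \<and> m_index C (induced E C) = card (dense_set V E \<inter> C)
          \<and> dense_set C (induced E C) = dense_set V E \<inter> C)
       \<and> (has_b_colouring V E (m_index V E) \<longleftrightarrow>
          (\<forall>C \<in> cocomponents V E. has_b_colouring C (induced E C) (m_index C (induced E C))))"
proof -
  have cocomponent_facts: "tight C (induced E C)
      \<and> m_index C (induced E C) = card (dense_set V E \<inter> C)
      \<and> dense_set C (induced E C) = dense_set V E \<inter> C \<and> V - C \<subseteq> dense_set V E"
    if C: "C \<in> cocomponents V E" for C
  proof -
    from assms(3) C obtain p where "\<forall>v \<in> dense_set V E \<inter> C. degree C (induced E C) v = p"
      "card (dense_set V E \<inter> C) = p + 1" by blast
    with cocomponent_tight[OF assms(1,2) C] cocomponent_m_index[OF assms(1,2) C]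
      cocomponent_dense_set[OF assms(1,2) C] outside_cocomponent_dense[OF assms(1,2) C]
    show ?thesis by simp
  qed
  then have part1: "\<forall>C \<in> cocomponents V E. tight C (induced E C)
      \<and> m_index C (induced E C) = card (dense_set V E \<inter> C)
      \<and> dense_set C (induced E C) = dense_set V E \<inter> C"
    by blast
  from cocomponents_single_or_distinct[of V E] show ?thesis
  proof (elim disjE bexE)
    assume "cocomponents V E \<subseteq> {V}"
    with part1 has_b_colouring_single_cocomponent[OF assms(1)] show ?thesis by blast
  next
    fix C D assume C: "C \<in> cocomponents V E" and D: "D \<in> cocomponents V E" and "C \<noteq> D"
    have all_dense: "dense_set V E = V"
      using cocomponents_disjoint[OF assms(1) C D \<open>C \<noteq> D\<close>] cocomponent_facts[OF C]
        cocomponent_facts[OF D]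
      unfolding dense_set_def by blast
    note b_colouring = complete_graph_induced_has_b_colouring[OF assms(1)
        tight_all_dense_complete[OF assms(1,2) all_dense]]
    have "m_index V E = card V" using assms(2) all_dense unfolding tight_def by simp
    with b_colouring[OF order_refl] have "has_b_colouring V E (m_index V E)"
      by (simp add: induced_self[OF assms(1)])
    moreover have "has_b_colouring C (induced E C) (m_index C (induced E C))"
      if "C \<in> cocomponents V E" for C
      using cocomponent_facts[OF that] cocomponents_subset[OF that] all_dense b_colouring
      by (simp add: Int_absorb1)
    ultimately show ?thesis using part1 by blast
  qed
qed

end
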